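(* Consider the causal adversarial multi-path network model described in the context, with $C$ links of unit capacity, overwrite jamming, no feedback and no secrecy requirement. For any adversary vector $\vec z=(z_{rw},z_{ro},z_{wo})$ with $z_{rw}+z_{ro}+z_{wo}\le C$, the capacity is $$R^{ow}_j(C,\vec z)=\begin{cases} C-(z_{rw}+z_{wo}) & \text{if } 2z_{wo}+2z_{rw}<C,\\ 0 & \text{otherwise.}\end{cases}$$
   Context: Model. A sender (Alice) communicates with a receiver (Bob) over $C$ parallel directed noiseless links $L_1,\dots,L_C$; in the equal-capacity case each link has unit capacity: over a block of $n$ time slots each link carries a length-$n$ word (one unit of information per time slot; the links are taken in the large-alphabet regime, i.e. symbols may be grouped into elements of finite fields $\mathbb F_{2^b}$ with $b$ growing with $n$). A code of block length $n$ and rate $R$ has message $M$ uniform on $\{0,1\}^{nR}$; the encoder is stochastic, using private randomness of Alice unknown to the adversary, and maps the message and randomness to codewords $\vec X_1,\dots,\vec X_C$ (row $i$ sent on $L_i$). The decoder maps the received words $\vec Y_1,\dots,\vec Y_C$ to an estimate $\hat M$. Adversary. An adversary (Calvin), who knows the encoder and decoder, selects pairwise disjoint link sets $Z_{rw},Z_{ro},Z_{wo}$ (unknown to Alice and Bob) with $|Z_{rw}|\le z_{rw}$, $|Z_{ro}|\le z_{ro}$, $|Z_{wo}|\le z_{wo}$; he can read (eavesdrop) the links in $Z_r=Z_{rw}\cup Z_{ro}$ and write (jam) the links in $Z_w=Z_{rw}\cup Z_{wo}$. Write $z_r=z_{rw}+z_{ro}$, $z_w=z_{rw}+z_{wo}$,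 $\vec z=(z_{rw},z_{ro},z_{wo})$. The adversary is causal: at each time $t$ his jamming of the $t$-th symbols of links in $Z_w$ may depend only on the first $t$ symbols observed on the links in $Z_r$ (and his own randomness). Under additive jamming, the received word on link $i$ is $\vec Y_i=\vec X_i+\vec E_i$ where $\vec E_i$ is chosen by Calvin and $\vec E_i=0$ for $i\notin Z_w$. Under overwrite jamming, $\vec Y_i=\vec E_i$ for $i\in Z_w$ (Calvin replaces the symbols by his own) and $\vec Y_i=\vec X_i$ otherwise. Reliability and capacity. Rate $R$ is achievable if for every $\varepsilon>0$ and all sufficiently large $n$ there is a code of block length $n$ and rate $R$ with $\Pr[\hat M\neq M]<\varepsilon$ against every admissible causal adversary strategy; the capacity is the supremum of achievable rates. (Without feedback, the encoder's output depends only on the message and Alice's randomness.) *)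

theory Defs
  imports "HOL-Probability.Probability"
begin

text \<open>
Links are indexed 0..C-1, time slots (symbols) 0..N-1.  Each link symbol is an
element of an alphabet of size q = 2^b (a symbol of F_{2^b}, i.e. b bits),
represented by the naturals below q.  A codeword is a list of C rows, each a
list of N symbols.
\<close>

type_synonym codeword = "nat list list"

text \<open>A deterministic jamming strategy: J i t X is the symbol Calvin writes on
link i at time t; it is given all transmitted rows X but must be causal (below).\<close>
type_synonym jammer = "nat \<Rightarrow> nat \<Rightarrow> (nat \<Rightarrow> nat list) \<Rightarrow> nat"

definition well_formed_code ::
  "nat \<Rightarrow> nat \<Rightarrow> nat \<Rightarrow> nat \<Rightarrow> (nat \<Rightarrow> codeword pmf) \<Rightarrow> bool" where
  "well_formed_code C q N K enc \<longleftrightarrow> K \<ge> 1 \<and>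
     (\<forall>m<K. \<forall>x\<in>set_pmf (enc m). length x = C \<and>
        (\<forall>row\<in>set x. length row = N \<and> (\<forall>s\<in>set row. s < q)))"

definition causal_jammer :: "nat \<Rightarrow> nat set \<Rightarrow> jammer \<Rightarrow> bool" where
  "causal_jammer q Zr J \<longleftrightarrow>
     (\<forall>i t X X'. (\<forall>j\<in>Zr. take (Suc t) (X j) = take (Suc t) (X' j))
          \<longrightarrow> J i t X = J i t X') \<and>
     (\<forall>i t X. J i t X < q)"

definition received_ow :: "nat \<Rightarrow> nat \<Rightarrow> nat set \<Rightarrow> jammer \<Rightarrow> codeword \<Rightarrow> codeword" where
  "received_ow C N Zw J X =
     map (\<lambda>i. if i \<in> Zw then map (\<lambda>t. J i t (\<lambda>j. X ! j)) [0..<N] else X ! i) [0..<C]"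

text \<open>Probability of decoding error: uniform message, Alice's private randomness
(inside enc), Calvin's independent randomness (a distribution adv over jammers).\<close>
definition error_prob ::
  "nat \<Rightarrow> nat \<Rightarrow> nat \<Rightarrow> (nat \<Rightarrow> codeword pmf) \<Rightarrow> (codeword \<Rightarrow> nat)
     \<Rightarrow> nat set \<Rightarrow> jammer pmf \<Rightarrow> real" where
  "error_prob C N K enc dec Zw adv =
     measure_pmf.prob
       (pmf_of_set {..<K} \<bind> (\<lambda>m. enc m \<bind> (\<lambda>X. adv \<bind>
          (\<lambda>J. return_pmf (dec (received_ow C N Zw J X) \<noteq> m))))) {True}"

definition admissible_adv ::
  "nat \<Rightarrow> nat \<Rightarrow> nat \<Rightarrow> nat \<Rightarrow> nat \<Rightarrow> nat set \<Rightarrow> nat set \<Rightarrow> nat set \<Rightarrow> jammer pmf \<Rightarrow> bool" where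
  "admissible_adv C q zrw zro zwo Zrw Zro Zwo adv \<longleftrightarrow>
     Zrw \<subseteq> {..<C} \<and> Zro \<subseteq> {..<C} \<and> Zwo \<subseteq> {..<C} \<and>
     Zrw \<inter> Zro = {} \<and> Zrw \<inter> Zwo = {} \<and> Zro \<inter> Zwo = {} \<and>
     card Zrw \<le> zrw \<and> card Zro \<le> zro \<and> card Zwo \<le> zwo \<and>
     (\<forall>J\<in>set_pmf adv. causal_jammer q (Zrw \<union> Zro) J)"

text \<open>Rate R achievable: for every eps > 0 and all sufficiently large block length N
there is a code (alphabet F_{2^b}, b \<ge> 1 allowed to depend on N) carrying at least
R*N*b bits (log2 K \<ge> R * N * b) with error < eps against every admissible causal
overwrite adversary.\<close>
definition ow_achievable :: "nat \<Rightarrow> nat \<Rightarrow> nat \<Rightarrow> nat \<Rightarrow> real \<Rightarrow> bool" where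
  "ow_achievable C zrw zro zwo R \<longleftrightarrow>
     (\<forall>eps>0. \<exists>N0. \<forall>N\<ge>N0. \<exists>b K enc dec. b \<ge> 1 \<and>
        well_formed_code C (2^b) N K enc \<and>
        log 2 (real K) \<ge> R * real N * real b \<and>
        (\<forall>Zrw Zro Zwo adv. admissible_adv C (2^b) zrw zro zwo Zrw Zro Zwo adv \<longrightarrow>
            error_prob C N K enc dec (Zrw \<union> Zwo) adv < eps))"

definition ow_capacity :: "nat \<Rightarrow> nat \<Rightarrow> nat \<Rightarrow> nat \<Rightarrow> real" where
  "ow_capacity C zrw zro zwo = Sup {R. R \<ge> 0 \<and> ow_achievable C zrw zro zwo R}"

end

theory Submission
  imports Defs "HOL-Computational_Algebra.Polynomial"
begin

text \<open>Achievability: the message is encoded by a Reed--Solomon code of dimension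
  \<open>k = C - (zrw + zwo)\<close> over \<open>\<int>/p\<close>, so any \<open>k\<close> correct rows determine it, and every link
  additionally carries a fresh random key followed by polynomial hashes of all rows under that key.
  A causal adversary must fix the data it writes before any key is sent, so a corrupted row
  matches its hash under an honest key only with probability \<open>L / p\<close>.  Bob accepts a row
  vouched for by \<open>k\<close> links: every correct row gets the votes of the \<open>C - (zrw + zwo) \<ge> k\<close>
  honest links, while a corrupted row gets at most the \<open>zrw + zwo < k\<close> jammed ones.
  Converse: zeroing \<open>zrw + zwo\<close> links leaves only \<open>C - (zrw + zwo)\<close> informative rows; and if
  \<open>2 (zrw + zwo) \<ge> C\<close>, replaying an independent codeword on a set of \<open>zrw + zwo\<close> links or on
  its complement are two attacks Bob cannot tell apart.\<close>

section \<open>Roots of integer polynomials modulo a prime\<close>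

lemma nat_mod_eq_iff_int_dvd_diff: "(a::nat) mod p = b mod p \<longleftrightarrow> int p dvd int a - int b"
  by (metis mod_eq_dvd_iff of_nat_mod of_nat_eq_iff)

lemma nat_eq_if_int_dvd_diff:
  assumes "a < p" "b < p" "int p dvd int a - int b"
  shows "a = b"
  using assms nat_mod_eq_iff_int_dvd_diff[of a p b] by simp

lemma dvd_coeff_mult_if_dvd_coeffs:
  fixes f g :: "'a::comm_semiring_1 poly"
  assumes "\<forall>s. c dvd coeff g s"
  shows "c dvd coeff (f * g) n"
  using assms by (auto simp: coeff_mult intro!: dvd_sum)

lemma synthetic_div_not_all_coeffs_dvd:
  fixes f :: "'a::comm_ring_1 poly"
  assumes "c dvd poly f a" "\<exists>s. \<not> c dvd coeff f s"
  shows "\<exists>s. \<not> c dvd coeff (synthetic_div f a) s"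
proof (rule ccontr)
  assume "\<not> ?thesis"
  then have "c dvd coeff ([:- a, 1:] * synthetic_div f a) s" for s
    by (intro dvd_coeff_mult_if_dvd_coeffs) simp
  then have "c dvd coeff ([:- a, 1:] * synthetic_div f a + [:poly f a:]) s" for s
    using assms(1) by (auto simp: coeff_pCons split: nat.split)
  then have "c dvd coeff f s" for s
    by (simp only: synthetic_div_correct')
  then show False
    using assms(2) by blast
qed

lemma card_roots_mod_prime_le_degree:
  fixes f :: "int poly"
  assumes "prime p" and "\<exists>s. \<not> int p dvd coeff f s"
  shows "card {x\<in>{..<p}. int p dvd poly f (int x)} \<le> degree f"
  using assms(2)
proof (induction "degree f" arbitrary: f rule: less_induct)
  case less
  let ?roots = "\<lambda>f. {x\<in>{..<p}. int p dvd poly f (int x)}"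
  show ?case
  proof (cases "?roots f = {}")
    case True
    then show ?thesis by (metis card.empty le0)
  next
    case False
    then obtain a where a: "a < p" "int p dvd poly f (int a)" by auto
    define g where "g = synthetic_div f (int a)"
    define r where "r = poly f (int a)"
    have f_eq: "f = [:- int a, 1:] * g + [:r:]"
      unfolding g_def r_def by (rule synthetic_div_correct'[symmetric])
    have g_nondvd: "\<exists>s. \<not> int p dvd coeff g s"
      unfolding g_def by (rule synthetic_div_not_all_coeffs_dvd[OF a(2) less.prems])
    then have "g \<noteq> 0" by auto
    then have deg_g: "degree g = degree f - 1" "0 < degree f"
      by (auto simp: g_def degree_synthetic_div synthetic_div_eq_0_iff)
    have roots_f: "?roots f \<subseteq> insert a (?roots g)"
    proof
      fix x assume x: "x \<in> ?roots f"
      have "poly f (int x) = (int x - int a) * poly g (int x) + r"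
        by (subst f_eq) (simp add: algebra_simps)
      then have "int p dvd (int x - int a) * poly g (int x)"
        using x a(2) by (simp add: r_def dvd_add_left_iff)
      then have "int p dvd int x - int a \<or> int p dvd poly g (int x)"
        using assms(1) by (simp add: prime_dvd_mult_iff)
      then show "x \<in> insert a (?roots g)"
        using x a(1) nat_eq_if_int_dvd_diff[of x p a] by auto
    qed
    have "card (?roots f) \<le> card (insert a (?roots g))"
      by (rule card_mono) (use roots_f in auto)
    also have "\<dots> \<le> Suc (card (?roots g))"
      by (simp add: card_insert_if)
    also have "card (?roots g) \<le> degree g"
      using less.hyps[of g] deg_g g_nondvd by simp
    finally show ?thesis using deg_g by simp
  qed
qed

lemma card_roots_mod_prime_sum_less:
  fixes c :: "nat \<Rightarrow> int"
  assumes "prime p" "s0 < n" "\<not> int p dvd c s0"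
  shows "card {x\<in>{..<p}. int p dvd (\<Sum>s<n. c s * int x ^ s)} < n"
proof -
  define f where "f = (\<Sum>s<n. monom (c s) s)"
  have poly_f: "poly f y = (\<Sum>s<n. c s * y ^ s)" for y
    by (simp add: f_def poly_sum poly_monom)
  have "coeff f s0 = c s0"
    using assms(2) by (simp add: f_def coeff_sum)
  then have "card {x\<in>{..<p}. int p dvd poly f (int x)} \<le> degree f"
    using assms(1,3) by (intro card_roots_mod_prime_le_degree) (auto intro!: exI[of _ s0])
  moreover have "degree f \<le> n - 1"
    unfolding f_def
    by (rule degree_sum_le) (use assms(2) in \<open>auto intro: order.trans[OF degree_monom_le]\<close>)
  ultimately show ?thesis using assms(2) by (simp add: poly_f)
qed

section \<open>Polynomial hashing and Reed--Solomon codes\<close>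

definition poly_hash :: "nat \<Rightarrow> nat list \<Rightarrow> nat \<Rightarrow> nat" where
  "poly_hash p d x = (\<Sum>s<length d. d ! s * x ^ Suc s) mod p"

lemma card_poly_hash_collisions_le:
  assumes "prime p" "length d' = length d" "d \<noteq> d'"
    and "set d \<subseteq> {..<p}" "set d' \<subseteq> {..<p}"
  shows "card {x\<in>{..<p}. poly_hash p d x = poly_hash p d' x} \<le> length d"
proof -
  let ?L = "length d"
  obtain s1 where s1: "s1 < ?L" "d ! s1 \<noteq> d' ! s1"
    using assms(2,3) nth_equalityI[of d d'] by auto
  define c where "c s = (if s = 0 then 0 else int (d ! (s - 1)) - int (d' ! (s - 1)))" for s
  have sum_c: "(\<Sum>s<Suc ?L. c s * y ^ s)
      = (\<Sum>s<?L. int (d ! s) * y ^ Suc s) - (\<Sum>s<?L. int (d' ! s) * y ^ Suc s)" for y :: int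
    by (subst sum.lessThan_Suc_shift) (simp add: c_def sum_subtractf algebra_simps)
  have "d ! s1 < p" "d' ! s1 < p"
    using s1(1) assms(2,4,5) nth_mem[of s1 d] nth_mem[of s1 d'] by (auto simp: subset_iff)
  then have "\<not> int p dvd c (Suc s1)"
    using s1(2) nat_eq_if_int_dvd_diff[of "d ! s1" p "d' ! s1"] by (auto simp: c_def)
  then have "card {x\<in>{..<p}. int p dvd (\<Sum>s<Suc ?L. c s * int x ^ s)} < Suc ?L"
    using s1(1) by (intro card_roots_mod_prime_sum_less[OF assms(1)]) simp_all
  moreover have "{x\<in>{..<p}. poly_hash p d x = poly_hash p d' x}
      = {x\<in>{..<p}. int p dvd (\<Sum>s<Suc ?L. c s * int x ^ s)}"
    unfolding sum_c poly_hash_def nat_mod_eq_iff_int_dvd_diff using assms(2) by simp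
  ultimately show ?thesis by simp
qed

lemma nat_eq_if_digits_eq:
  fixes p :: nat
  assumes "1 < p" "m < p ^ n" "m' < p ^ n" "\<forall>i<n. m div p ^ i mod p = m' div p ^ i mod p"
  shows "m = m'"
  using assms(2-4)
proof (induction n arbitrary: m m')
  case (Suc n)
  have "m div p < p ^ n" "m' div p < p ^ n"
    using Suc.prems(1,2) assms(1) by (auto simp: less_mult_imp_div_less mult.commute)
  moreover have "\<forall>i<n. m div p div p ^ i mod p = m' div p div p ^ i mod p"
    using Suc.prems(3) by (auto simp: div_mult2_eq[symmetric] mult.commute)
  ultimately have "m div p = m' div p" using Suc.IH by blast
  moreover have "m mod p = m' mod p" using Suc.prems(3)[rule_format, of 0] by simp
  ultimately show ?case by (metis div_mult_mod_eq)
qed simp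

text \<open>A Reed--Solomon code over \<open>\<int>/p\<close>: the base-\<open>p\<close> digits of a message \<open>m < p ^ (k * L)\<close>
  are cut into \<open>L\<close> blocks of \<open>k\<close>; at time \<open>t\<close>, link \<open>i\<close> carries the \<open>t\<close>-th block, read as a
  polynomial of degree \<open>< k\<close>, evaluated at \<open>i\<close>.\<close>

definition msg_digit :: "nat \<Rightarrow> nat \<Rightarrow> nat \<Rightarrow> nat \<Rightarrow> nat \<Rightarrow> nat" where
  "msg_digit p k m t r = m div p ^ (t * k + r) mod p"

definition rs_symbol :: "nat \<Rightarrow> nat \<Rightarrow> nat \<Rightarrow> nat \<Rightarrow> nat \<Rightarrow> nat" where
  "rs_symbol p k m i t = (\<Sum>r<k. msg_digit p k m t r * i ^ r) mod p"

definition rs_row :: "nat \<Rightarrow> nat \<Rightarrow> nat \<Rightarrow> nat \<Rightarrow> nat \<Rightarrow> nat list" where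
  "rs_row p k L m i = map (rs_symbol p k m i) [0..<L]"

lemma length_rs_row [simp]: "length (rs_row p k L m i) = L"
  by (simp add: rs_row_def)

lemma set_rs_row_subset: "0 < p \<Longrightarrow> set (rs_row p k L m i) \<subseteq> {..<p}"
  by (auto simp: rs_row_def rs_symbol_def)

lemma msg_digit_eq_if_rs_symbols_eq:
  assumes "prime p" "A \<subseteq> {..<p}" "k \<le> card A" "r < k"
    and "\<forall>i\<in>A. rs_symbol p k m i t = rs_symbol p k m' i t"
  shows "msg_digit p k m t r = msg_digit p k m' t r"
proof (rule ccontr)
  assume ne: "msg_digit p k m t r \<noteq> msg_digit p k m' t r"
  define c where "c s = int (msg_digit p k m t s) - int (msg_digit p k m' t s)" for s
  have "0 < p" using assms(1) prime_gt_0_nat by blast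
  then have "msg_digit p k m t r < p" "msg_digit p k m' t r < p"
    by (auto simp: msg_digit_def)
  then have "\<not> int p dvd c r"
    using ne nat_eq_if_int_dvd_diff by (auto simp: c_def)
  then have "card {x\<in>{..<p}. int p dvd (\<Sum>s<k. c s * int x ^ s)} < k"
    by (rule card_roots_mod_prime_sum_less[OF assms(1,4)])
  moreover have "A \<subseteq> {x\<in>{..<p}. int p dvd (\<Sum>s<k. c s * int x ^ s)}"
  proof
    fix i assume i: "i \<in> A"
    have "(\<Sum>s<k. c s * int i ^ s)
        = int (\<Sum>r<k. msg_digit p k m t r * i ^ r) - int (\<Sum>r<k. msg_digit p k m' t r * i ^ r)"
      by (simp add: c_def sum_subtractf algebra_simps)
    then show "i \<in> {x\<in>{..<p}. int p dvd (\<Sum>s<k. c s * int x ^ s)}"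
      using assms(2,5) i by (auto simp: rs_symbol_def nat_mod_eq_iff_int_dvd_diff)
  qed
  then have "card A \<le> card {x\<in>{..<p}. int p dvd (\<Sum>s<k. c s * int x ^ s)}"
    by (intro card_mono) auto
  ultimately show False using assms(3) by simp
qed

lemma rs_row_inj:
  assumes "prime p" "A \<subseteq> {..<p}" "k \<le> card A" "0 < k"
    and "m < p ^ (k * L)" "m' < p ^ (k * L)" "\<forall>i\<in>A. rs_row p k L m' i = rs_row p k L m i"
  shows "m' = m"
proof (rule nat_eq_if_digits_eq)
  show "1 < p" using assms(1) prime_gt_1_nat by blast
  have digits: "msg_digit p k m' t r = msg_digit p k m t r" if "t < L" "r < k" for t r
  proof (rule msg_digit_eq_if_rs_symbols_eq[OF assms(1-3) \<open>r < k\<close>], intro ballI)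
    fix i assume "i \<in> A"
    then have "rs_row p k L m' i ! t = rs_row p k L m i ! t"
      using assms(7) by simp
    then show "rs_symbol p k m' i t = rs_symbol p k m i t"
      using \<open>t < L\<close> by (simp add: rs_row_def)
  qed
  show "\<forall>i<k * L. m' div p ^ i mod p = m div p ^ i mod p"
  proof (intro allI impI)
    fix i assume "i < k * L"
    then have "i div k < L" "i mod k < k"
      using assms(4) by (simp_all add: div_less_iff_less_mult mult.commute)
    then show "m' div p ^ i mod p = m div p ^ i mod p"
      using digits[of "i div k" "i mod k"] by (simp add: msg_digit_def)
  qed
qed (use assms in auto)

definition auth_codeword :: "nat \<Rightarrow> nat \<Rightarrow> nat \<Rightarrow> nat \<Rightarrow> nat \<Rightarrow> (nat \<Rightarrow> nat) \<Rightarrow> codeword" where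
  "auth_codeword p k L C m key = map (\<lambda>i. rs_row p k L m i @ key i #
      map (\<lambda>j. poly_hash p (rs_row p k L m j) (key i)) [0..<C]) [0..<C]"

text \<open>Received symbols are reduced modulo \<open>p\<close>, since jammed symbols range over the whole
  alphabet \<open>{..<2 ^ b}\<close>.\<close>

definition received_data :: "nat \<Rightarrow> nat \<Rightarrow> codeword \<Rightarrow> nat \<Rightarrow> nat list" where
  "received_data p L Y j = map (\<lambda>s. s mod p) (take L (Y ! j))"

definition votes :: "nat \<Rightarrow> nat \<Rightarrow> nat \<Rightarrow> codeword \<Rightarrow> nat \<Rightarrow> nat" where
  "votes p L C Y j =
     card {l\<in>{..<C}. poly_hash p (received_data p L Y j) (Y ! l ! L) = Y ! l ! (Suc L + j)}"

definition accepted_rows :: "nat \<Rightarrow> nat \<Rightarrow> nat \<Rightarrow> nat \<Rightarrow> codeword \<Rightarrow> nat set" where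
  "accepted_rows p k L C Y = {j\<in>{..<C}. k \<le> votes p L C Y j}"

definition auth_decode :: "nat \<Rightarrow> nat \<Rightarrow> nat \<Rightarrow> nat \<Rightarrow> codeword \<Rightarrow> nat" where
  "auth_decode p k L C Y = (SOME m. m < p ^ (k * L) \<and>
     (\<forall>j\<in>accepted_rows p k L C Y. rs_row p k L m j = received_data p L Y j))"

lemma length_auth_codeword [simp]: "length (auth_codeword p k L C m key) = C"
  by (simp add: auth_codeword_def)

lemma nth_auth_codeword:
  "l < C \<Longrightarrow> auth_codeword p k L C m key ! l
     = rs_row p k L m l @ key l # map (\<lambda>j. poly_hash p (rs_row p k L m j) (key l)) [0..<C]"
  by (simp add: auth_codeword_def)

lemma take_auth_codeword_row:
  "i < C \<Longrightarrow> n \<le> L \<Longrightarrow> take n (auth_codeword p k L C m key ! i) = take n (rs_row p k L m i)"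
  by (simp add: nth_auth_codeword)

lemma accepted_rows_eq_correct_rows:
  assumes Zw: "Zw \<subseteq> {..<C}" "card Zw < k" "k + card Zw \<le> C"
    and honest: "\<And>l. l < C \<Longrightarrow> l \<notin> Zw \<Longrightarrow> Y ! l = auth_codeword p k L C m key ! l"
    and detect: "\<And>l j. l < C \<Longrightarrow> l \<notin> Zw \<Longrightarrow> j < C \<Longrightarrow>
        received_data p L Y j \<noteq> rs_row p k L m j \<Longrightarrow>
        poly_hash p (received_data p L Y j) (key l) \<noteq> poly_hash p (rs_row p k L m j) (key l)"
  shows "accepted_rows p k L C Y = {j\<in>{..<C}. received_data p L Y j = rs_row p k L m j}"
proof -
  define H where "H = {..<C} - Zw"
  have "finite Zw" using Zw(1) finite_subset by blast
  then have card_H: "k \<le> card H"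
    using Zw by (simp add: H_def card_Diff_subset)
  have key: "Y ! l ! L = key l"
    and hash: "Y ! l ! (Suc L + j) = poly_hash p (rs_row p k L m j) (key l)"
    if "l \<in> H" "j < C" for l j
    using that honest[of l] by (auto simp: H_def nth_auth_codeword nth_append)
  let ?voters = "\<lambda>j. {l\<in>{..<C}. poly_hash p (received_data p L Y j) (Y ! l ! L) = Y ! l ! (Suc L + j)}"
  have "H \<subseteq> ?voters j" if "j < C" "received_data p L Y j = rs_row p k L m j" for j
    using that key hash by (auto simp: H_def)
  then have accept: "k \<le> votes p L C Y j" if "j < C" "received_data p L Y j = rs_row p k L m j" for j
    using that card_H card_mono[of "?voters j" H] by (force simp: votes_def)
  have "?voters j \<subseteq> Zw" if "j < C" "received_data p L Y j \<noteq> rs_row p k L m j" for j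
    using that key hash detect by (force simp: H_def)
  then have reject: "votes p L C Y j < k" if "j < C" "received_data p L Y j \<noteq> rs_row p k L m j" for j
    using that Zw(2) card_mono[OF \<open>finite Zw\<close>, of "?voters j"] by (force simp: votes_def)
  show ?thesis
    using accept reject by (force simp: accepted_rows_def not_le[symmetric])
qed

lemma auth_decode_correct:
  assumes "prime p" "C \<le> p" "m < p ^ (k * L)"
    and Zw: "Zw \<subseteq> {..<C}" "card Zw < k" "k + card Zw \<le> C"
    and honest: "\<And>l. l < C \<Longrightarrow> l \<notin> Zw \<Longrightarrow> Y ! l = auth_codeword p k L C m key ! l"
    and detect: "\<And>l j. l < C \<Longrightarrow> l \<notin> Zw \<Longrightarrow> j < C \<Longrightarrow>
        received_data p L Y j \<noteq> rs_row p k L m j \<Longrightarrow>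
        poly_hash p (received_data p L Y j) (key l) \<noteq> poly_hash p (rs_row p k L m j) (key l)"
  shows "auth_decode p k L C Y = m"
proof -
  let ?A = "accepted_rows p k L C Y"
  have A_eq: "?A = {j\<in>{..<C}. received_data p L Y j = rs_row p k L m j}"
    using accepted_rows_eq_correct_rows[OF Zw honest detect] by blast
  have "0 < p" using assms(1) prime_gt_0_nat by blast
  then have "received_data p L Y l = rs_row p k L m l" if "l < C" "l \<notin> Zw" for l
    using that honest set_rs_row_subset[of p k L m l]
    by (auto simp: received_data_def nth_auth_codeword intro!: map_idI)
  then have "{..<C} - Zw \<subseteq> ?A" by (auto simp: A_eq)
  then have "card ({..<C} - Zw) \<le> card ?A"
    by (rule card_mono[rotated]) (simp add: accepted_rows_def)
  moreover have "card ({..<C} - Zw) = C - card Zw"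
    using Zw(1) finite_subset by (subst card_Diff_subset) auto
  ultimately have card_A: "k \<le> card ?A"
    using Zw(3) by simp
  have A_sub: "?A \<subseteq> {..<p}" using assms(2) by (auto simp: accepted_rows_def)
  have unique: "m' = m"
    if "m' < p ^ (k * L)" "\<forall>j\<in>?A. rs_row p k L m' j = received_data p L Y j" for m'
  proof (rule rs_row_inj[OF assms(1) A_sub card_A])
    show "\<forall>j\<in>?A. rs_row p k L m' j = rs_row p k L m j"
      using that(2) by (simp add: A_eq)
  qed (use that assms(3) Zw(2) in auto)
  show ?thesis
    unfolding auth_decode_def
  proof (rule someI2[where a = m])
    show "m < p ^ (k * L) \<and> (\<forall>j\<in>?A. rs_row p k L m j = received_data p L Y j)"
      using assms(3) by (simp add: A_eq)
  qed (use unique in blast)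
qed

section \<open>Error probability against a causal adversary\<close>

definition key_pmf :: "nat \<Rightarrow> nat \<Rightarrow> (nat \<Rightarrow> nat) pmf" where
  "key_pmf p C = Pi_pmf {..<C} 0 (\<lambda>_. pmf_of_set {..<p})"

definition auth_encode :: "nat \<Rightarrow> nat \<Rightarrow> nat \<Rightarrow> nat \<Rightarrow> nat \<Rightarrow> codeword pmf" where
  "auth_encode p k L C m = map_pmf (auth_codeword p k L C m) (key_pmf p C)"

lemma prob_key_pmf_component:
  assumes "l < C" "0 < p"
  shows "measure_pmf.prob (key_pmf p C) {key. key l \<in> S} = real (card ({..<p} \<inter> S)) / real p"
proof -
  have "map_pmf (\<lambda>key. key l) (key_pmf p C) = pmf_of_set {..<p}"
    unfolding key_pmf_def using assms by (subst Pi_pmf_component) auto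
  then have "measure_pmf.prob (key_pmf p C) {key. key l \<in> S} = measure_pmf.prob (pmf_of_set {..<p}) S"
    by (metis measure_map_pmf vimage_Collect_eq vimage_def)
  also have "\<dots> = real (card ({..<p} \<inter> S)) / real p"
    using assms by (subst measure_pmf_of_set) auto
  finally show ?thesis .
qed

lemma prob_poly_hash_collision_le:
  assumes "prime p" "l < C" "length d' = length d" "d \<noteq> d'" "set d \<subseteq> {..<p}" "set d' \<subseteq> {..<p}"
  shows "measure_pmf.prob (key_pmf p C) {key. poly_hash p d (key l) = poly_hash p d' (key l)}
    \<le> real (length d) / real p"
proof -
  define S where "S = {x. poly_hash p d x = poly_hash p d' x}"
  have "0 < p" using assms(1) prime_gt_0_nat by blast
  have "card ({..<p} \<inter> S) \<le> length d"
    using card_poly_hash_collisions_le[OF assms(1,3-6)] by (simp add: S_def Int_def conj_commute)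
  then show ?thesis
    using prob_key_pmf_component[OF assms(2) \<open>0 < p\<close>, of S]
    by (simp add: S_def divide_right_mono)
qed

lemma nth_received_ow:
  "j < C \<Longrightarrow> received_ow C N Zw J X ! j = (if j \<in> Zw then map (\<lambda>t. J j t (\<lambda>i. X ! i)) [0..<N] else X ! j)"
  by (simp add: received_ow_def)

lemma received_data_independent_of_keys:
  assumes "causal_jammer q Zr J" "Zr \<subseteq> {..<C}" "j < C" "L \<le> N"
  shows "received_data p L (received_ow C N Zw J (auth_codeword p k L C m key)) j
       = received_data p L (received_ow C N Zw J (auth_codeword p k L C m key')) j"
proof (cases "j \<in> Zw")
  case True
  have "J j t (\<lambda>i. auth_codeword p k L C m key ! i) = J j t (\<lambda>i. auth_codeword p k L C m key' ! i)"
    if "t < L" for t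
  proof -
    have "\<forall>i\<in>Zr. take (Suc t) (auth_codeword p k L C m key ! i)
                = take (Suc t) (auth_codeword p k L C m key' ! i)"
      using assms(2) that by (auto simp: take_auth_codeword_row)
    then show ?thesis using assms(1) unfolding causal_jammer_def by blast
  qed
  then show ?thesis
    using True assms(3,4) by (simp add: received_data_def nth_received_ow take_map)
qed (use assms(3) in \<open>simp add: received_data_def nth_received_ow take_auth_codeword_row\<close>)

lemma prob_auth_decode_error_le:
  assumes p: "prime p" "C \<le> p" and m: "m < p ^ (k * L)" and N: "N = L + Suc C"
    and Zw: "Zw \<subseteq> {..<C}" "card Zw < k" "k + card Zw \<le> C"
    and Zr: "Zr \<subseteq> {..<C}" and J: "causal_jammer q Zr J"
  shows "measure_pmf.prob (key_pmf p C)
           {key. auth_decode p k L C (received_ow C N Zw J (auth_codeword p k L C m key)) \<noteq> m}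
         \<le> real (C * C * L) / real p"
proof -
  have "0 < p" using p(1) prime_gt_0_nat by blast
  define D where "D j = received_data p L (received_ow C N Zw J (auth_codeword p k L C m (\<lambda>_. 0))) j" for j
  define B where "B lj = {key. D (snd lj) \<noteq> rs_row p k L m (snd lj) \<and>
       poly_hash p (D (snd lj)) (key (fst lj)) = poly_hash p (rs_row p k L m (snd lj)) (key (fst lj))}"
    for lj :: "nat \<times> nat"
  have D: "received_data p L (received_ow C N Zw J (auth_codeword p k L C m key)) j = D j"
    if "j < C" for key j
    unfolding D_def using N by (intro received_data_independent_of_keys[OF J Zr that]) simp
  have "{key. auth_decode p k L C (received_ow C N Zw J (auth_codeword p k L C m key)) \<noteq> m}
      \<subseteq> (\<Union>lj\<in>{..<C} \<times> {..<C}. B lj)"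
  proof (rule subsetI, rule ccontr)
    fix key
    assume "key \<notin> (\<Union>lj\<in>{..<C} \<times> {..<C}. B lj)"
    then have "auth_decode p k L C (received_ow C N Zw J (auth_codeword p k L C m key)) = m"
      by (intro auth_decode_correct[OF p m Zw]) (auto simp: nth_received_ow D B_def)
    moreover assume "key \<in> {key. auth_decode p k L C (received_ow C N Zw J (auth_codeword p k L C m key)) \<noteq> m}"
    ultimately show False by simp
  qed
  then have "measure_pmf.prob (key_pmf p C)
        {key. auth_decode p k L C (received_ow C N Zw J (auth_codeword p k L C m key)) \<noteq> m}
      \<le> measure_pmf.prob (key_pmf p C) (\<Union>lj\<in>{..<C} \<times> {..<C}. B lj)"
    by (rule measure_pmf.finite_measure_mono) simp
  also have "\<dots> \<le> (\<Sum>lj\<in>{..<C} \<times> {..<C}. measure_pmf.prob (key_pmf p C) (B lj))"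
    by (rule measure_UNION_le) auto
  also have "\<dots> \<le> (\<Sum>lj\<in>{..<C} \<times> {..<C}. real L / real p)"
  proof (rule sum_mono)
    fix lj :: "nat \<times> nat" assume lj: "lj \<in> {..<C} \<times> {..<C}"
    show "measure_pmf.prob (key_pmf p C) (B lj) \<le> real L / real p"
    proof (cases "D (snd lj) = rs_row p k L m (snd lj)")
      case False
      have "length (D (snd lj)) = L" "set (D (snd lj)) \<subseteq> {..<p}"
        using lj N \<open>0 < p\<close> by (auto simp: D_def received_data_def nth_received_ow nth_auth_codeword)
      then show ?thesis
        using prob_poly_hash_collision_le[OF p(1), of "fst lj" C "rs_row p k L m (snd lj)" "D (snd lj)"]
          False lj set_rs_row_subset[OF \<open>0 < p\<close>] by (auto simp: B_def)
    qed (simp add: B_def)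
  qed
  also have "\<dots> = real (C * C * L) / real p" by simp
  finally show ?thesis .
qed

lemma pmf_bind_le:
  assumes "\<And>x. x \<in> set_pmf M \<Longrightarrow> pmf (f x) a \<le> d" "0 \<le> d"
  shows "pmf (bind_pmf M f) a \<le> d"
proof -
  have "pmf (bind_pmf M f) a = (\<integral>x. pmf (f x) a \<partial>measure_pmf M)" by (rule pmf_bind)
  also have "\<dots> \<le> (\<integral>x. d \<partial>measure_pmf M)"
    by (rule integral_mono_AE') (use assms in \<open>auto simp: AE_measure_pmf_iff\<close>)
  finally show ?thesis by simp
qed

lemma error_prob_auth_code_le:
  assumes p: "prime p" "C \<le> p" and N: "N = L + Suc C"
    and k: "zrw + zwo < k" "k + (zrw + zwo) = C"
    and adm: "admissible_adv C q zrw zro zwo Zrw Zro Zwo adv"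
  shows "error_prob C N (p ^ (k * L)) (auth_encode p k L C) (auth_decode p k L C) (Zrw \<union> Zwo) adv
         \<le> real (C * C * L) / real p"
proof -
  let ?Zw = "Zrw \<union> Zwo"
  have "card ?Zw \<le> zrw + zwo"
    using card_Un_le[of Zrw Zwo] adm by (auto simp: admissible_adv_def)
  then have Zw: "?Zw \<subseteq> {..<C}" "card ?Zw < k" "k + card ?Zw \<le> C"
    using adm k by (auto simp: admissible_adv_def)
  have Zr: "Zrw \<union> Zro \<subseteq> {..<C}" using adm by (auto simp: admissible_adv_def)
  have "0 < p" using p(1) prime_gt_0_nat by blast
  let ?bound = "real (C * C * L) / real p"
  have "pmf (pmf_of_set {..<p ^ (k * L)} \<bind> (\<lambda>m. auth_encode p k L C m \<bind> (\<lambda>X. adv \<bind>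
          (\<lambda>J. return_pmf (auth_decode p k L C (received_ow C N ?Zw J X) \<noteq> m))))) True \<le> ?bound"
  proof (rule pmf_bind_le)
    fix m assume "m \<in> set_pmf (pmf_of_set {..<p ^ (k * L)})"
    moreover have "{..<p ^ (k * L)} \<noteq> {}" using \<open>0 < p\<close> by (simp add: lessThan_empty_iff)
    ultimately have m: "m < p ^ (k * L)" by (subst (asm) set_pmf_of_set) auto
    show "pmf (auth_encode p k L C m \<bind> (\<lambda>X. adv \<bind>
          (\<lambda>J. return_pmf (auth_decode p k L C (received_ow C N ?Zw J X) \<noteq> m)))) True \<le> ?bound"
      unfolding bind_commute_pmf[of "auth_encode p k L C m"]
    proof (rule pmf_bind_le)
      fix J assume "J \<in> set_pmf adv"
      then have J: "causal_jammer q (Zrw \<union> Zro) J" using adm by (auto simp: admissible_adv_def)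
      have "pmf (auth_encode p k L C m \<bind> (\<lambda>X. return_pmf (auth_decode p k L C (received_ow C N ?Zw J X) \<noteq> m))) True
          = measure_pmf.prob (key_pmf p C)
              {key. auth_decode p k L C (received_ow C N ?Zw J (auth_codeword p k L C m key)) \<noteq> m}"
        by (simp add: auth_encode_def map_pmf_def[symmetric] pmf_map vimage_def)
      also have "\<dots> \<le> ?bound" by (rule prob_auth_decode_error_le[OF p m N Zw Zr J])
      finally show "pmf (auth_encode p k L C m \<bind>
          (\<lambda>X. return_pmf (auth_decode p k L C (received_ow C N ?Zw J X) \<noteq> m))) True \<le> ?bound" .
    qed simp
  qed simp
  then show ?thesis by (simp add: error_prob_def measure_pmf_single)
qed

section \<open>Achievability\<close>

definition codewords :: "nat \<Rightarrow> nat \<Rightarrow> nat \<Rightarrow> codeword set" where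
  "codewords C q N = {X. length X = C \<and> (\<forall>row\<in>set X. length row = N \<and> (\<forall>s\<in>set row. s < q))}"

lemma well_formed_code_iff:
  "well_formed_code C q N K enc \<longleftrightarrow> 1 \<le> K \<and> (\<forall>m<K. set_pmf (enc m) \<subseteq> codewords C q N)"
  unfolding well_formed_code_def codewords_def by blast

lemma auth_code_well_formed:
  assumes "prime p" "p \<le> q" "N = L + Suc C"
  shows "well_formed_code C q N (p ^ (k * L)) (auth_encode p k L C)"
  unfolding well_formed_code_iff
proof (intro conjI allI impI subsetI)
  have "0 < p" using assms(1) prime_gt_0_nat by blast
  then show "1 \<le> p ^ (k * L)" by simp
  fix m X assume "X \<in> set_pmf (auth_encode p k L C m)"
  then obtain key where key: "key \<in> set_pmf (key_pmf p C)" and X: "X = auth_codeword p k L C m key"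
    by (auto simp: auth_encode_def)
  have "key i < p" if "i < C" for i
  proof -
    have "key i \<in> set_pmf (pmf_of_set {..<p})"
      using key that by (auto simp: key_pmf_def set_Pi_pmf PiE_dflt_def)
    then show ?thesis using \<open>0 < p\<close> by (simp add: lessThan_empty_iff)
  qed
  then have "set (X ! i) \<subseteq> {..<p}" "length (X ! i) = N" if "i < C" for i
    using that \<open>0 < p\<close> set_rs_row_subset[OF \<open>0 < p\<close>] assms(3)
    by (auto simp: X nth_auth_codeword poly_hash_def)
  then show "X \<in> codewords C q N"
    using assms(2) by (fastforce simp: codewords_def X in_set_conv_nth)
qed

lemma auth_code_good:
  assumes p: "prime p" "C \<le> p" "p \<le> q" and N: "N = L + Suc C"
    and k: "zrw + zwo < k" "k + (zrw + zwo) = C" and eps: "real (C * C * L) / real p < eps"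
  shows "well_formed_code C q N (p ^ (k * L)) (auth_encode p k L C)"
    and "admissible_adv C q zrw zro zwo Zrw Zro Zwo adv \<Longrightarrow>
      error_prob C N (p ^ (k * L)) (auth_encode p k L C) (auth_decode p k L C) (Zrw \<union> Zwo) adv < eps"
  using auth_code_well_formed[OF p(1,3) N] error_prob_auth_code_le[OF p(1,2) N k] eps by fastforce+

lemma exists_bit_length:
  fixes p :: nat
  assumes "1 < p"
  obtains b where "1 \<le> b" "p \<le> 2 ^ b" "real b - 1 < log 2 (real p)"
proof
  define b where "b = (LEAST b. p \<le> 2 ^ b)"
  show p_le: "p \<le> 2 ^ b" unfolding b_def by (rule LeastI[of _ p]) (simp add: less_imp_le)
  show "1 \<le> b" using p_le assms by (cases b) auto
  then have "\<not> p \<le> 2 ^ (b - 1)"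
    unfolding b_def by (intro not_less_Least) (simp add: b_def)
  then have "log 2 (2 ^ (b - 1)) < log 2 (real p)"
    by (subst log_less_cancel_iff) (auto simp flip: of_nat_power)
  then show "real b - 1 < log 2 (real p)"
    using \<open>1 \<le> b\<close> by (simp add: log_nat_power of_nat_diff)
qed

lemma eventually_mult_le_mult_diff:
  fixes r :: real
  assumes "r < real k"
  obtains N0 where "\<And>N. N0 \<le> N \<Longrightarrow> c \<le> N \<and> r * real N \<le> real k * real (N - c)"
proof
  fix N assume N: "nat \<lceil>real k * real c / (real k - r)\<rceil> + c \<le> N"
  then have "real k * real c / (real k - r) \<le> real N" by linarith
  then have "real k * real c \<le> (real k - r) * real N"
    using assms by (simp add: pos_divide_le_eq mult.commute)
  then show "c \<le> N \<and> r * real N \<le> real k * real (N - c)"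
    using N by (simp add: of_nat_diff algebra_simps)
qed

lemma rate_le_log_card:
  fixes R R' :: real
  assumes "R < R'" "R' * real N \<le> real k * real L" "R' / (R' - R) \<le> real b - 1"
    and "1 \<le> b" "real b - 1 < log 2 (real p)"
  shows "R * real N * real b \<le> log 2 (real (p ^ (k * L)))"
proof -
  have "R' \<le> (real b - 1) * (R' - R)" using assms(1,3) by (simp add: pos_divide_le_eq)
  then have "R * real b \<le> R' * (real b - 1)" using assms(1) by (simp add: algebra_simps)
  then have "R * real N * real b \<le> R' * real N * (real b - 1)"
    using mult_left_mono[of "R * real b" "R' * (real b - 1)" "real N"] by (simp add: algebra_simps)
  also have "\<dots> \<le> real k * real L * (real b - 1)"
    using assms(2,4) by (intro mult_right_mono) auto
  also have "\<dots> \<le> real k * real L * log 2 (real p)"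
    using assms(5) by (intro mult_left_mono) auto
  also have "\<dots> = log 2 (real (p ^ (k * L)))"
    by (simp add: log_nat_power)
  finally show ?thesis .
qed

lemma ow_achievable_below_honest_links:
  assumes "2 * zwo + 2 * zrw < C" "R < real (C - (zrw + zwo))"
  shows "ow_achievable C zrw zro zwo R"
  unfolding ow_achievable_def
proof (intro allI impI)
  fix eps :: real assume "0 < eps"
  define k where "k = C - (zrw + zwo)"
  have k: "zrw + zwo < k" "k + (zrw + zwo) = C" using assms(1) by (auto simp: k_def)
  define R' where "R' = (R + real k) / 2"
  have R': "R < R'" "R' < real k" using assms(2) by (auto simp: R'_def k_def)
  obtain N0 where N0: "\<And>N. N0 \<le> N \<Longrightarrow> Suc C \<le> N \<and> R' * real N \<le> real k * real (N - Suc C)"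
    using eventually_mult_le_mult_diff[OF R'(2)] by blast
  show "\<exists>N0. \<forall>N\<ge>N0. \<exists>b K enc dec. 1 \<le> b \<and> well_formed_code C (2 ^ b) N K enc \<and>
          R * real N * real b \<le> log 2 (real K) \<and>
          (\<forall>Zrw Zro Zwo adv. admissible_adv C (2 ^ b) zrw zro zwo Zrw Zro Zwo adv \<longrightarrow>
             error_prob C N K enc dec (Zrw \<union> Zwo) adv < eps)"
  proof (rule exI[of _ N0], intro allI impI)
    fix N assume "N0 \<le> N"
    define L where "L = N - Suc C"
    have N: "N = L + Suc C" and rate_N: "R' * real N \<le> real k * real L"
      using N0[OF \<open>N0 \<le> N\<close>] by (auto simp: L_def)
    define B0 where "B0 = nat \<lceil>R' / (R' - R)\<rceil>"
    obtain p where p: "prime p" "max (2 ^ B0) (max C (nat \<lceil>real (C * C * L) / eps\<rceil>)) < p"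
      using bigger_prime by blast
    then obtain b where b: "1 \<le> b" "p \<le> 2 ^ b" "real b - 1 < log 2 (real p)"
      using exists_bit_length prime_gt_1_nat by metis
    have "(2::nat) ^ B0 < 2 ^ b" using p(2) b(2) by linarith
    then have "B0 < b" by simp
    then have "R' / (R' - R) \<le> real b - 1" unfolding B0_def by linarith
    have "real (C * C * L) / eps < real p"
      using p(2) by linarith
    then have "real (C * C * L) < eps * real p"
      using \<open>0 < eps\<close> by (simp add: divide_less_eq mult.commute)
    then have "real (C * C * L) / real p < eps"
      using prime_gt_0_nat[OF p(1)] by (simp add: divide_less_eq mult.commute)
    then show "\<exists>b K enc dec. 1 \<le> b \<and> well_formed_code C (2 ^ b) N K enc \<and>
          R * real N * real b \<le> log 2 (real K) \<and>
          (\<forall>Zrw Zro Zwo adv. admissible_adv C (2 ^ b) zrw zro zwo Zrw Zro Zwo adv \<longrightarrow>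
             error_prob C N K enc dec (Zrw \<union> Zwo) adv < eps)"
      using b(1) auth_code_good[OF p(1) _ b(2) N k] p(2)
        rate_le_log_card[OF R'(1) rate_N \<open>R' / (R' - R) \<le> real b - 1\<close> b(1,3)]
      by (intro exI[of _ b] exI[of _ "p ^ (k * L)"] exI[of _ "auth_encode p k L C"]
          exI[of _ "auth_decode p k L C"]) simp
  qed
qed

section \<open>Converse\<close>

lemma ow_achievable_codeE:
  assumes "ow_achievable C zrw zro zwo R" "0 < eps"
  obtains N b K enc dec where "Nmin \<le> N" "1 \<le> b" "well_formed_code C (2 ^ b) N K enc"
    "R * real N * real b \<le> log 2 (real K)"
    "\<And>Zrw Zro Zwo adv. admissible_adv C (2 ^ b) zrw zro zwo Zrw Zro Zwo adv \<Longrightarrow>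
       error_prob C N K enc dec (Zrw \<union> Zwo) adv < eps"
proof -
  obtain N0 where "\<forall>N\<ge>N0. \<exists>b K enc dec. 1 \<le> b \<and> well_formed_code C (2 ^ b) N K enc \<and>
      R * real N * real b \<le> log 2 (real K) \<and>
      (\<forall>Zrw Zro Zwo adv. admissible_adv C (2 ^ b) zrw zro zwo Zrw Zro Zwo adv \<longrightarrow>
         error_prob C N K enc dec (Zrw \<union> Zwo) adv < eps)"
    using assms unfolding ow_achievable_def by blast
  then show ?thesis using that[of "max N0 Nmin"] by (meson max.cobounded1 max.cobounded2)
qed

lemma pmf_bind_return_True: "pmf (bind_pmf M (\<lambda>x. return_pmf (P x))) True = measure_pmf.prob M {x. P x}"
  by (simp add: map_pmf_def[symmetric] pmf_map vimage_def)

lemma error_prob_return_pmf: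
  assumes "1 \<le> K"
  shows "error_prob C N K enc dec Zw (return_pmf J)
    = 1 - (\<Sum>m<K. measure_pmf.prob (enc m) {X. dec (received_ow C N Zw J X) = m}) / real K"
proof -
  let ?success = "\<lambda>m. measure_pmf.prob (enc m) {X. dec (received_ow C N Zw J X) = m}"
  have "pmf (bind_pmf (enc m) (\<lambda>X. return_pmf (dec (received_ow C N Zw J X) \<noteq> m))) True
      = 1 - ?success m" for m
    using measure_pmf.prob_compl[of "{X. dec (received_ow C N Zw J X) = m}" "enc m"]
    by (simp add: pmf_bind_return_True Compl_eq_Diff_UNIV[symmetric] Collect_neg_eq)
  moreover have "{..<K} \<noteq> {}" using assms by (simp add: lessThan_empty_iff)
  ultimately have "error_prob C N K enc dec Zw (return_pmf J) = (\<Sum>m<K. 1 - ?success m) / real K"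
    unfolding error_prob_def measure_pmf_single by (simp add: bind_return_pmf pmf_bind_pmf_of_set)
  then show ?thesis
    using assms by (simp add: sum_subtractf diff_divide_distrib)
qed

lemma finite_codewords: "finite (codewords C q N)"
proof -
  have "codewords C q N = {X. set X \<subseteq> {row. set row \<subseteq> {..<q} \<and> length row = N} \<and> length X = C}"
    by (auto simp: codewords_def)
  then show ?thesis
    by (simp add: finite_lists_length_eq)
qed

text \<open>Each channel output is decoded to a single message, while success probability above
  \<open>1/2\<close> forces more than \<open>K/2\<close> messages to be decoded correctly from some output.\<close>

lemma card_messages_lt_twice_card_outputs:
  assumes wf: "well_formed_code C q N K enc"
    and err: "error_prob C N K enc dec Zw (return_pmf J) < 1 / 2"
  shows "real K < 2 * real (card (received_ow C N Zw J ` codewords C q N))"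
proof -
  let ?g = "received_ow C N Zw J"
  define c where "c m = measure_pmf.prob (enc m) {X. dec (?g X) = m}" for m
  define S where "S = {m\<in>{..<K}. c m \<noteq> 0}"
  have K: "1 \<le> K" using wf by (simp add: well_formed_code_iff)
  have "S \<subseteq> dec ` ?g ` codewords C q N"
  proof
    fix m assume m: "m \<in> S"
    then obtain X where "X \<in> set_pmf (enc m)" "dec (?g X) = m"
      by (auto simp: S_def c_def measure_pmf_zero_iff)
    moreover have "set_pmf (enc m) \<subseteq> codewords C q N" using m wf by (simp add: well_formed_code_iff S_def)
    ultimately show "m \<in> dec ` ?g ` codewords C q N" by force
  qed
  then have "card S \<le> card (?g ` codewords C q N)"
    using finite_codewords by (meson card_image_le card_mono finite_imageI order.trans)
  moreover have "(\<Sum>m<K. c m) \<le> real (card S)"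
  proof -
    have "(\<Sum>m<K. c m) = (\<Sum>m\<in>S. c m)"
      by (rule sum.mono_neutral_right) (auto simp: S_def)
    also have "\<dots> \<le> (\<Sum>m\<in>S. 1)" by (rule sum_mono) (simp add: c_def)
    finally show ?thesis by simp
  qed
  moreover have "real K / 2 < (\<Sum>m<K. c m)"
    using err error_prob_return_pmf[OF K, of C N enc dec Zw J] K by (simp add: c_def field_simps)
  ultimately show ?thesis by linarith
qed

lemma card_received_zeroed_le:
  assumes "zw \<le> C"
  shows "card (received_ow C N {..<zw} (\<lambda>_ _ _. 0) ` codewords C q N) \<le> (q ^ N) ^ (C - zw)"
proof -
  define rows where "rows = {row::nat list. set row \<subseteq> {..<q} \<and> length row = N}"
  define T where "T = {ys. set ys \<subseteq> rows \<and> length ys = C - zw}"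
  define h where "h ys = map (\<lambda>i. if i \<in> {..<zw} then map (\<lambda>t. 0::nat) [0..<N] else ys ! (i - zw)) [0..<C]"
    for ys
  have "finite rows" "card rows = q ^ N"
    unfolding rows_def by (simp_all add: finite_lists_length_eq card_lists_length_eq)
  then have T: "finite T" "card T = (q ^ N) ^ (C - zw)"
    unfolding T_def by (simp_all add: finite_lists_length_eq card_lists_length_eq)
  have "received_ow C N {..<zw} (\<lambda>_ _ _. 0) ` codewords C q N \<subseteq> h ` T"
  proof
    fix Y assume "Y \<in> received_ow C N {..<zw} (\<lambda>_ _ _. 0) ` codewords C q N"
    then obtain X where X: "X \<in> codewords C q N" and Y: "Y = received_ow C N {..<zw} (\<lambda>_ _ _. 0) X"
      by auto
    have "drop zw X \<in> T"
      using X assms by (auto simp: T_def rows_def codewords_def dest: in_set_dropD)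
    moreover have "Y = h (drop zw X)"
      unfolding Y h_def received_ow_def using X assms by (intro map_cong refl) (auto simp: codewords_def)
    ultimately show "Y \<in> h ` T" by auto
  qed
  then show ?thesis
    using T by (metis card_image_le card_mono finite_imageI order.trans)
qed

lemma ow_achievable_le_honest_links:
  assumes "zrw + zro + zwo \<le> C" "ow_achievable C zrw zro zwo R"
  shows "R \<le> real (C - (zrw + zwo))"
proof (rule ccontr)
  define zw where "zw = zrw + zwo"
  define k where "k = C - zw"
  assume "\<not> R \<le> real (C - (zrw + zwo))"
  then have "0 < R - real k" by (simp add: k_def zw_def)
  obtain N b K enc dec where N: "nat \<lceil>1 / (R - real k)\<rceil> + 1 \<le> N" and b: "1 \<le> b"
    and wf: "well_formed_code C (2 ^ b) N K enc" and rate: "R * real N * real b \<le> log 2 (real K)"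
    and err: "\<And>Zrw Zro Zwo adv. admissible_adv C (2 ^ b) zrw zro zwo Zrw Zro Zwo adv \<Longrightarrow>
       error_prob C N K enc dec (Zrw \<union> Zwo) adv < 1 / 2"
    by (rule ow_achievable_codeE[OF assms(2), where eps = "1 / 2" and Nmin = "nat \<lceil>1 / (R - real k)\<rceil> + 1"])
      (simp, blast)
  have "admissible_adv C (2 ^ b) zrw zro zwo {..<zrw} {} {zrw..<zw} (return_pmf (\<lambda>_ _ _. 0))"
    using assms(1) by (auto simp: admissible_adv_def causal_jammer_def zw_def)
  moreover have "{..<zrw} \<union> {zrw..<zw} = {..<zw}" by (auto simp: zw_def)
  ultimately have "error_prob C N K enc dec {..<zw} (return_pmf (\<lambda>_ _ _. 0)) < 1 / 2"
    using err by metis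
  then have "real K < 2 * real (card (received_ow C N {..<zw} (\<lambda>_ _ _. 0) ` codewords C (2 ^ b) N))"
    by (rule card_messages_lt_twice_card_outputs[OF wf])
  also have "\<dots> \<le> 2 * 2 ^ (b * N * k)"
  proof -
    have "card (received_ow C N {..<zw} (\<lambda>_ _ _. 0) ` codewords C (2 ^ b) N) \<le> 2 ^ (b * N * k)"
      using card_received_zeroed_le[of zw C N "2 ^ b"] assms(1) by (simp add: k_def zw_def power_mult)
    then show ?thesis by (metis mult_le_cancel_left_pos of_nat_le_iff of_nat_numeral of_nat_power zero_less_numeral)
  qed
  finally have "log 2 (real K) < log 2 (2 * 2 ^ (b * N * k))"
    using wf by (subst log_less_cancel_iff) (auto simp: well_formed_code_iff)
  then have "R * real N * real b < 1 + real b * real N * real k"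
    using rate by (simp add: log_mult log_nat_power)
  moreover have "1 < (R - real k) * real N"
  proof -
    have "1 / (R - real k) < real N" using N by linarith
    then show ?thesis using \<open>0 < R - real k\<close> by (simp add: divide_less_eq mult.commute)
  qed
  moreover have "(R - real k) * real N \<le> (R - real k) * real N * real b"
    using b \<open>0 < R - real k\<close> mult_left_mono[of 1 "real b" "(R - real k) * real N"] by simp
  ultimately show False
    by (simp add: algebra_simps)
qed

definition msg_codeword_pmf :: "nat \<Rightarrow> (nat \<Rightarrow> codeword pmf) \<Rightarrow> (nat \<times> codeword) pmf" where
  "msg_codeword_pmf K enc = pmf_of_set {..<K} \<bind> (\<lambda>m. map_pmf (\<lambda>X. (m, X)) (enc m))"

definition indep_pair_prob :: "'a pmf \<Rightarrow> ('a \<Rightarrow> 'a \<Rightarrow> bool) \<Rightarrow> real" where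
  "indep_pair_prob Q P = pmf (Q \<bind> (\<lambda>a. Q \<bind> (\<lambda>a'. return_pmf (P a a')))) True"

definition replay_jammer :: "codeword \<Rightarrow> jammer" where
  "replay_jammer X' = (\<lambda>i t _. if i < length X' \<and> t < length (X' ! i) then X' ! i ! t else 0)"

definition replay_adv :: "nat \<Rightarrow> (nat \<Rightarrow> codeword pmf) \<Rightarrow> jammer pmf" where
  "replay_adv K enc = map_pmf (\<lambda>a. replay_jammer (snd a)) (msg_codeword_pmf K enc)"

definition splice_rows :: "nat \<Rightarrow> nat set \<Rightarrow> codeword \<Rightarrow> codeword \<Rightarrow> codeword" where
  "splice_rows C W X X' = map (\<lambda>i. if i \<in> W then X' ! i else X ! i) [0..<C]"

lemma bind_msg_codeword_pmf:
  "msg_codeword_pmf K enc \<bind> F = pmf_of_set {..<K} \<bind> (\<lambda>m. enc m \<bind> (\<lambda>X. F (m, X)))"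
  by (simp add: msg_codeword_pmf_def bind_assoc_pmf bind_map_pmf o_def)

lemma map_fst_msg_codeword_pmf: "map_pmf fst (msg_codeword_pmf K enc) = pmf_of_set {..<K}"
  by (simp add: msg_codeword_pmf_def map_bind_pmf pmf.map_comp o_def map_pmf_const bind_return_pmf')

lemma set_msg_codeword_pmf:
  assumes "a \<in> set_pmf (msg_codeword_pmf K enc)" "1 \<le> K"
  shows "fst a < K" "snd a \<in> set_pmf (enc (fst a))"
proof -
  have "{..<K} \<noteq> {}" using assms(2) by (simp add: lessThan_empty_iff)
  then show "fst a < K" "snd a \<in> set_pmf (enc (fst a))"
    using assms(1) by (auto simp: msg_codeword_pmf_def)
qed

lemma indep_pair_prob_swap: "indep_pair_prob Q P = indep_pair_prob Q (\<lambda>a a'. P a' a)"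
  unfolding indep_pair_prob_def by (subst bind_commute_pmf) simp

lemma indep_pair_prob_le_add:
  assumes "\<And>a a'. P a a' \<Longrightarrow> P1 a a' \<or> P2 a a'"
  shows "indep_pair_prob Q P \<le> indep_pair_prob Q P1 + indep_pair_prob Q P2"
proof -
  have pair: "indep_pair_prob Q P = measure_pmf.prob (pair_pmf Q Q) {x. P (fst x) (snd x)}" for P
  proof -
    have "Q \<bind> (\<lambda>a. Q \<bind> (\<lambda>a'. return_pmf (P a a')))
        = pair_pmf Q Q \<bind> (\<lambda>x. return_pmf (P (fst x) (snd x)))"
      by (simp add: pair_pmf_def bind_assoc_pmf bind_return_pmf)
    then show ?thesis unfolding indep_pair_prob_def by (simp add: pmf_bind_return_True)
  qed
  let ?M = "pair_pmf Q Q"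
  have "measure_pmf.prob ?M {x. P (fst x) (snd x)}
      \<le> measure_pmf.prob ?M ({x. P1 (fst x) (snd x)} \<union> {x. P2 (fst x) (snd x)})"
    by (rule measure_pmf.finite_measure_mono) (use assms in auto)
  also have "\<dots> \<le> measure_pmf.prob ?M {x. P1 (fst x) (snd x)} + measure_pmf.prob ?M {x. P2 (fst x) (snd x)}"
    by (rule measure_subadditive) (auto simp: measure_pmf.emeasure_finite)
  finally show ?thesis by (simp add: pair)
qed

lemma indep_pair_prob_msgs_differ:
  assumes "1 \<le> K"
  shows "indep_pair_prob (msg_codeword_pmf K enc) (\<lambda>a a'. fst a \<noteq> fst a') = (real K - 1) / real K"
proof -
  let ?U = "pmf_of_set {..<K}"
  have ne: "{..<K} \<noteq> {}" using assms by (simp add: lessThan_empty_iff)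
  have fst: "msg_codeword_pmf K enc \<bind> (\<lambda>a. F (fst a)) = ?U \<bind> F" for F :: "nat \<Rightarrow> bool pmf"
    using bind_map_pmf[of fst "msg_codeword_pmf K enc" F] by (simp add: map_fst_msg_codeword_pmf)
  have "pmf (?U \<bind> (\<lambda>m'. return_pmf (m \<noteq> m'))) True = (real K - 1) / real K" if "m < K" for m
  proof -
    have "{..<K} \<inter> {m'. m \<noteq> m'} = {..<K} - {m}" by auto
    then show ?thesis
      using ne that by (simp add: pmf_bind_return_True measure_pmf_of_set of_nat_diff)
  qed
  then have "pmf (?U \<bind> (\<lambda>m. ?U \<bind> (\<lambda>m'. return_pmf (m \<noteq> m')))) True = (real K - 1) / real K"
    using ne assms by (simp add: pmf_bind_pmf_of_set)
  moreover have "msg_codeword_pmf K enc \<bind> (\<lambda>a. msg_codeword_pmf K enc \<bind> (\<lambda>a'. return_pmf (fst a \<noteq> fst a')))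
      = ?U \<bind> (\<lambda>m. ?U \<bind> (\<lambda>m'. return_pmf (m \<noteq> m')))"
    by (simp add: fst[of "\<lambda>m'. return_pmf (_ \<noteq> m')"] fst[of "\<lambda>m. ?U \<bind> (\<lambda>m'. return_pmf (m \<noteq> m'))"])
  ultimately show ?thesis
    unfolding indep_pair_prob_def by simp
qed

lemma received_ow_replay_jammer:
  assumes "length X' = C" "\<forall>row\<in>set X'. length row = N"
  shows "received_ow C N W (replay_jammer X') X = splice_rows C W X X'"
proof -
  have "map (\<lambda>t. replay_jammer X' i t (\<lambda>j. X ! j)) [0..<N] = X' ! i" if "i < C" for i
  proof -
    have "length (X' ! i) = N" using assms that by simp
    then show ?thesis
      using assms(1) that by (intro nth_equalityI) (auto simp: replay_jammer_def)
  qed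
  then show ?thesis
    unfolding received_ow_def splice_rows_def by (intro map_cong refl) auto
qed

lemma error_prob_replay_adv:
  assumes wf: "well_formed_code C q N K enc"
  shows "error_prob C N K enc dec W (replay_adv K enc)
       = indep_pair_prob (msg_codeword_pmf K enc) (\<lambda>a a'. dec (splice_rows C W (snd a) (snd a')) \<noteq> fst a)"
proof -
  let ?Q = "msg_codeword_pmf K enc"
  have K: "1 \<le> K" using wf by (simp add: well_formed_code_def)
  have received: "received_ow C N W (replay_jammer (snd a')) X = splice_rows C W X (snd a')"
    if "a' \<in> set_pmf ?Q" for a' X
    using wf set_msg_codeword_pmf[OF that K]
    by (intro received_ow_replay_jammer) (auto simp: well_formed_code_def)
  have "error_prob C N K enc dec W (replay_adv K enc) = pmf (?Q \<bind> (\<lambda>a. ?Q \<bind> (\<lambda>a'.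
      return_pmf (dec (received_ow C N W (replay_jammer (snd a')) (snd a)) \<noteq> fst a)))) True"
    unfolding error_prob_def measure_pmf_single replay_adv_def
    by (simp add: bind_msg_codeword_pmf bind_map_pmf)
  also have "\<dots> = pmf (?Q \<bind> (\<lambda>a. ?Q \<bind> (\<lambda>a'.
      return_pmf (dec (splice_rows C W (snd a) (snd a')) \<noteq> fst a)))) True"
    by (intro arg_cong2[where f = pmf] refl bind_pmf_cong) (auto simp: received)
  finally show ?thesis unfolding indep_pair_prob_def .
qed

text \<open>Symmetrization: replaying a codeword of an independent message on \<open>W\<close> produces the same
  received word as replaying the true codeword on the complement of \<open>W\<close> with the roles of the
  two messages exchanged, so Bob cannot tell which of the two messages was sent.\<close>

lemma error_prob_replay_adv_complement_ge:
  assumes wf: "well_formed_code C q N K enc"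
  shows "(real K - 1) / real K \<le>
    error_prob C N K enc dec W (replay_adv K enc) + error_prob C N K enc dec ({..<C} - W) (replay_adv K enc)"
proof -
  let ?Q = "msg_codeword_pmf K enc"
  have K: "1 \<le> K" using wf by (simp add: well_formed_code_def)
  have "splice_rows C ({..<C} - W) X X' = splice_rows C W X' X" for X X'
    unfolding splice_rows_def by (intro map_cong refl) auto
  then have "error_prob C N K enc dec ({..<C} - W) (replay_adv K enc)
      = indep_pair_prob ?Q (\<lambda>a a'. dec (splice_rows C W (snd a) (snd a')) \<noteq> fst a')"
    by (simp add: error_prob_replay_adv[OF wf] indep_pair_prob_swap[where P = "\<lambda>a a'. dec (splice_rows C W (snd a') (snd a)) \<noteq> fst a"])
  moreover have "(real K - 1) / real K
      \<le> indep_pair_prob ?Q (\<lambda>a a'. dec (splice_rows C W (snd a) (snd a')) \<noteq> fst a)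
       + indep_pair_prob ?Q (\<lambda>a a'. dec (splice_rows C W (snd a) (snd a')) \<noteq> fst a')"
    unfolding indep_pair_prob_msgs_differ[OF K, of enc, symmetric] by (rule indep_pair_prob_le_add) auto
  ultimately show ?thesis by (simp add: error_prob_replay_adv[OF wf])
qed

lemma admissible_replay_adv:
  assumes wf: "well_formed_code C q N K enc" and "0 < q"
    and "Zrw \<subseteq> {..<C}" "Zwo \<subseteq> {..<C}" "Zrw \<inter> Zwo = {}" "card Zrw \<le> zrw" "card Zwo \<le> zwo"
  shows "admissible_adv C q zrw zro zwo Zrw {} Zwo (replay_adv K enc)"
proof -
  have K: "1 \<le> K" using wf by (simp add: well_formed_code_def)
  have "causal_jammer q Zrw J" if J: "J \<in> set_pmf (replay_adv K enc)" for J
  proof -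
    obtain a where a: "a \<in> set_pmf (msg_codeword_pmf K enc)" and J_eq: "J = replay_jammer (snd a)"
      using J unfolding replay_adv_def set_map_pmf by blast
    have "\<forall>row\<in>set (snd a). \<forall>s\<in>set row. s < q"
      using wf set_msg_codeword_pmf[OF a K] unfolding well_formed_code_def by blast
    then show ?thesis
      using \<open>0 < q\<close> by (auto simp: J_eq causal_jammer_def replay_jammer_def)
        (meson nth_mem)
  qed
  then show ?thesis
    using assms(3-) by (auto simp: admissible_adv_def)
qed

lemma ow_achievable_le_zero:
  assumes "zrw + zro + zwo \<le> C" "\<not> 2 * zwo + 2 * zrw < C" "ow_achievable C zrw zro zwo R"
  shows "R \<le> 0"
proof (rule ccontr)
  assume "\<not> R \<le> 0"
  obtain N b K enc dec where N: "1 \<le> N" and b: "1 \<le> b"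
    and wf: "well_formed_code C (2 ^ b) N K enc" and rate: "R * real N * real b \<le> log 2 (real K)"
    and err: "\<And>Zrw Zro Zwo adv. admissible_adv C (2 ^ b) zrw zro zwo Zrw Zro Zwo adv \<Longrightarrow>
       error_prob C N K enc dec (Zrw \<union> Zwo) adv < 1 / 4"
    by (rule ow_achievable_codeE[OF assms(3), where eps = "1 / 4" and Nmin = 1]) (simp, blast)
  have "0 < R * real N * real b"
    using N b \<open>\<not> R \<le> 0\<close> by simp
  then have "K \<noteq> 1" using rate by auto
  then have "2 \<le> K" using wf by (simp add: well_formed_code_def)
  define zw where "zw = zrw + zwo"
  define m2 where "m2 = min C (zw + zrw)"
  have "error_prob C N K enc dec ({..<zrw} \<union> {zrw..<zw}) (replay_adv K enc) < 1 / 4"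
    by (rule err, rule admissible_replay_adv[OF wf]) (use assms(1) in \<open>auto simp: zw_def\<close>)
  moreover have "{..<zrw} \<union> {zrw..<zw} = {..<zw}" by (auto simp: zw_def)
  ultimately have err1: "error_prob C N K enc dec {..<zw} (replay_adv K enc) < 1 / 4" by simp
  have "error_prob C N K enc dec ({zw..<m2} \<union> {m2..<C}) (replay_adv K enc) < 1 / 4"
    by (rule err, rule admissible_replay_adv[OF wf]) (use assms(1,2) in \<open>auto simp: zw_def m2_def\<close>)
  moreover have "{zw..<m2} \<union> {m2..<C} = {..<C} - {..<zw}" using assms(1) by (auto simp: zw_def m2_def)
  ultimately have err2: "error_prob C N K enc dec ({..<C} - {..<zw}) (replay_adv K enc) < 1 / 4" by simp
  have "1 / 2 \<le> (real K - 1) / real K" using \<open>2 \<le> K\<close> by (simp add: field_simps)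
  then show False
    using error_prob_replay_adv_complement_ge[OF wf, of dec "{..<zw}"] err1 err2 by linarith
qed

lemma ow_achievable_zero: "ow_achievable C zrw zro zwo 0"
proof -
  let ?enc = "\<lambda>N (m::nat). return_pmf (replicate C (replicate N (0::nat)))"
  have "pmf_of_set {..<Suc 0} = return_pmf 0"
    by (simp add: lessThan_Suc pmf_of_set_singleton)
  then have "1 \<le> (1::nat) \<and> well_formed_code C (2 ^ 1) N 1 (?enc N) \<and>
      0 * real N * real (1::nat) \<le> log 2 (real (1::nat)) \<and>
      (\<forall>Zrw Zro Zwo adv. admissible_adv C (2 ^ 1) zrw zro zwo Zrw Zro Zwo adv \<longrightarrow>
         error_prob C N 1 (?enc N) (\<lambda>_. 0) (Zrw \<union> Zwo) adv < eps)" if "0 < eps" for N and eps :: real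
    using that by (simp add: well_formed_code_def error_prob_def bind_return_pmf)
  then show ?thesis
    unfolding ow_achievable_def by blast
qed

theorem theorem2:
  fixes C zrw zro zwo :: nat
  assumes "zrw + zro + zwo \<le> C"
  shows "ow_capacity C zrw zro zwo =
           (if 2 * zwo + 2 * zrw < C then real (C - (zrw + zwo)) else 0)"
proof -
  let ?S = "{R. R \<ge> 0 \<and> ow_achievable C zrw zro zwo R}"
  have "0 \<in> ?S" by (simp add: ow_achievable_zero)
  show ?thesis
  proof (cases "2 * zwo + 2 * zrw < C")
    case True
    let ?k = "real (C - (zrw + zwo))"
    have "Sup ?S = ?k"
    proof (rule cSup_eq_non_empty)
      show "R \<le> ?k" if "R \<in> ?S" for R
        using that ow_achievable_le_honest_links[OF assms] by blast
      show "?k \<le> y" if "\<And>R. R \<in> ?S \<Longrightarrow> R \<le> y" for y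
      proof (rule dense_le)
        fix R assume "R < ?k"
        moreover have "0 < ?k" using True by simp
        ultimately have "max R 0 \<in> ?S" using ow_achievable_below_honest_links[OF True] by simp
        then show "R \<le> y" using that by fastforce
      qed
    qed (use \<open>0 \<in> ?S\<close> in blast)
    then show ?thesis using True by (simp add: ow_capacity_def)
  next
    case False
    then have "?S = {0}" using \<open>0 \<in> ?S\<close> ow_achievable_le_zero[OF assms False] by force
    then show ?thesis using False by (simp add: ow_capacity_def)
  qed
qed

end
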